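(* Let $x$ be an indeterminate and let $m,n$ be positive integers with $m\geq n$. Then, as an identity of rational functions in $x$ over $\mathbb{Q}$, \begin{multline*} \sum_{k=0}^{n} \binom{m+k}{k} \binom{m}{k} \binom{n+k}{k} \binom{n}{k} \Biggl\{ \frac{-k}{(x+k)^2} + \frac{1+k \bigl(H_{m+k}^{(1)} +H_{m-k}^{(1)} + H_{n+k}^{(1)} + H_{n-k}^{(1)} -4H_k^{(1)}\bigr)}{x+k} \Biggr\} \\ +\sum_{k=n+1}^{m} \frac{(-1)^{k-n}}{x+k} \binom{m+k}{k} \binom{m}{k} \binom{n+k}{k} \Big/ \binom{k-1}{n} =\frac{x\, (1-x)_{n}\, (1-x)_{m}}{(x)_{n+1}\, (x)_{m+1}}. \end{multline*}
   Context: For non-negative integers $i$ and $n$, the generalized harmonic sum is $H^{(i)}_{n}:=\sum_{j=1}^{n} j^{-i}$ for $n\ge 1$, and $H^{(i)}_{0}:=0$. For $a$ and a non-negative integer $n$, $(a)_n$ denotes the rising factorial: $(a)_0:=1$ and $(a)_n:=a(a+1)\cdots(a+n-1)$ for $n>0$. An empty sum equals $0$. *)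

theory Defs
  imports Complex_Main
begin

definition gharm :: "nat \<Rightarrow> nat \<Rightarrow> rat" where
  "gharm i n = (\<Sum>j=1..n. 1 / (of_nat j) ^ i)"

end

theory Submission
  imports Defs "HOL-Analysis.Harmonic_Numbers"
begin

text \<open>
  Write R(m,n;x) for the right-hand side. The left-hand side is a sum of terms
  c_k/(x+k) + d_k/(x+k)^2, and it equals R(m,n;x) by induction, first on m with n = 0 (starting
  from R(0,0;x) = 1/x), then on n \<le> m, using R(m+1,n;x) = R(m,n;x) (b-x)/(x+b) with b = m+1 and
  R(m,n+1;x) = R(m,n;x) (a-x)/(x+a) with a = n+1.

  Multiplying c/(x+k) + d/(x+k)^2 by (b-x)/(x+b) gives a term of the same shape plus 2b times its
  value at -b, divided by x+b. In the step in m, -b is a new simple pole with coefficient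
  2b R(m,n;-b). In the step in n, -a is already a simple pole and becomes a double one; its new
  simple-pole coefficient involves the regular part of the expansion at -a, which is the derivative
  at -a of (x+a) R(m,n;x) and is computed by logarithmic differentiation. The identity over the
  rationals is the image of the one over the reals.
\<close>

section \<open>Partial fraction sums\<close>

definition pfrac_sum :: "(nat \<Rightarrow> real) \<Rightarrow> (nat \<Rightarrow> real) \<Rightarrow> nat set \<Rightarrow> real \<Rightarrow> real" where
  "pfrac_sum c d K x = (\<Sum>k\<in>K. c k / (x + real k) + d k / (x + real k)^2)"

lemma pfrac_term_times_ratio:
  fixes b x c d k :: real
  assumes "k \<noteq> b" "x + b \<noteq> 0" "x + k \<noteq> 0"
  shows "(c / (x + k) + d / (x + k)^2) * ((b - x) / (x + b))
       = (c * (b + k) / (b - k) - 2 * b * d / (b - k)^2) / (x + k) + (d * (b + k) / (b - k)) / (x + k)^2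
         + 2 * b * (c / (-b + k) + d / (-b + k)^2) / (x + b)"
proof -
  have "b - k \<noteq> 0" "-b + k = - (b - k)" using assms by auto
  then show ?thesis using assms
    by (simp add: divide_simps) (simp add: algebra_simps power2_eq_square power3_eq_cube)
qed

lemma pfrac_sum_times_ratio:
  fixes b :: real
  assumes "finite K" "\<forall>k\<in>K. real k \<noteq> b" "x + b \<noteq> 0" "\<forall>k\<in>K. x + real k \<noteq> 0"
  shows "pfrac_sum c d K x * ((b - x) / (x + b))
       = pfrac_sum (\<lambda>k. c k * (b + k) / (b - k) - 2 * b * d k / (b - k)^2)
           (\<lambda>k. d k * (b + k) / (b - k)) K x
         + 2 * b * pfrac_sum c d K (-b) / (x + b)"
proof -
  have "pfrac_sum c d K x * ((b - x) / (x + b))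
      = (\<Sum>k\<in>K. (c k * (b + k) / (b - k) - 2 * b * d k / (b - k)^2) / (x + k)
              + (d k * (b + k) / (b - k)) / (x + k)^2 + 2 * b * (c k / (-b + k) + d k / (-b + k)^2) / (x + b))"
    unfolding pfrac_sum_def sum_distrib_right
    by (rule sum.cong[OF refl], rule pfrac_term_times_ratio) (use assms in auto)
  also have "\<dots> = pfrac_sum (\<lambda>k. c k * (b + k) / (b - k) - 2 * b * d k / (b - k)^2)
           (\<lambda>k. d k * (b + k) / (b - k)) K x
         + (\<Sum>k\<in>K. 2 * b * (c k / (-b + k) + d k / (-b + k)^2) / (x + b))"
    unfolding pfrac_sum_def sum.distrib by simp
  also have "(\<Sum>k\<in>K. 2 * b * (c k / (-b + k) + d k / (-b + k)^2) / (x + b))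
      = 2 * b * pfrac_sum c d K (-b) / (x + b)"
    by (simp add: pfrac_sum_def sum_distrib_left sum_divide_distrib)
  finally show ?thesis .
qed

lemma pfrac_sum_cong:
  "(\<And>k. k \<in> K \<Longrightarrow> c k = c' k) \<Longrightarrow> (\<And>k. k \<in> K \<Longrightarrow> d k = d' k) \<Longrightarrow>
     pfrac_sum c d K x = pfrac_sum c' d' K x"
  unfolding pfrac_sum_def by (rule sum.cong) auto

lemma pfrac_sum_remove:
  "finite K \<Longrightarrow> j \<in> K \<Longrightarrow>
     pfrac_sum c d K x = pfrac_sum c d (K - {j}) x + c j / (x + real j) + d j / (x + real j)^2"
  unfolding pfrac_sum_def by (subst sum.remove) auto

section \<open>Regular parts and logarithmic derivatives\<close>

lemma regular_part_eq_deriv: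
  fixes \<phi> g :: "'a::real_normed_field \<Rightarrow> 'a"
  assumes deriv: "(\<phi> has_field_derivative D) (at z)"
    and cont: "isCont g z"
    and near: "\<forall>\<^sub>F x in at z. \<phi> x = (x - z) * g x + e"
  shows "\<phi> z = e" and "g z = D"
proof -
  have "((\<lambda>x. (x - z) * g x + e) \<longlongrightarrow> (z - z) * g z + e) (at z)"
    using cont by (intro tendsto_intros) (auto simp: isCont_def)
  then have lim_e: "(\<phi> \<longlongrightarrow> e) (at z)"
    by (simp add: tendsto_cong[OF near])
  have lim_\<phi>: "(\<phi> \<longlongrightarrow> \<phi> z) (at z)"
    using DERIV_isCont[OF deriv] by (simp add: isCont_def)
  show \<phi>_z: "\<phi> z = e"
    using tendsto_unique[OF at_neq_bot lim_\<phi> lim_e] .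
  have "\<forall>\<^sub>F x in at z. x \<noteq> z"
    by (simp add: eventually_at_filter)
  with near have quotient: "\<forall>\<^sub>F x in at z. (\<phi> x - \<phi> z) / (x - z) = g x"
    by eventually_elim (simp add: \<phi>_z)
  have "((\<lambda>x. (\<phi> x - \<phi> z) / (x - z)) \<longlongrightarrow> D) (at z)"
    using deriv by (simp add: has_field_derivative_iff)
  then have lim_D: "(g \<longlongrightarrow> D) (at z)"
    by (rule iffD1[OF tendsto_cong[OF quotient]])
  have lim_g: "(g \<longlongrightarrow> g z) (at z)"
    using cont by (simp add: isCont_def)
  show "g z = D"
    using tendsto_unique[OF at_neq_bot lim_g lim_D] .
qed

lemma DERIV_prod_logarithmic:
  fixes u :: "'i \<Rightarrow> real \<Rightarrow> real"
  assumes "finite I"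
    and "\<And>i. i \<in> I \<Longrightarrow> (u i has_field_derivative u' i) (at y)"
    and "\<And>i. i \<in> I \<Longrightarrow> u i y \<noteq> 0"
  shows "((\<lambda>x. \<Prod>i\<in>I. u i x) has_field_derivative (\<Prod>i\<in>I. u i y) * (\<Sum>i\<in>I. u' i / u i y)) (at y)"
  using assms
proof (induction I rule: finite_induct)
  case (insert j I)
  have dj: "(u j has_field_derivative u' j) (at y)" and nz: "u j y \<noteq> 0"
    using insert by auto
  have dI: "((\<lambda>x. \<Prod>i\<in>I. u i x) has_field_derivative (\<Prod>i\<in>I. u i y) * (\<Sum>i\<in>I. u' i / u i y)) (at y)"
    using insert by auto
  have cancel: "a * P + P * S * c = c * P * (a / c + S)" if "c \<noteq> 0" for a P S c :: real
    using that by (simp add: field_simps)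
  have "u' j * (\<Prod>i\<in>I. u i y) + (\<Prod>i\<in>I. u i y) * (\<Sum>i\<in>I. u' i / u i y) * u j y
      = u j y * (\<Prod>i\<in>I. u i y) * (u' j / u j y + (\<Sum>i\<in>I. u' i / u i y))"
    by (rule cancel[OF nz])
  with DERIV_mult[OF dj dI] show ?case
    using insert by simp
qed simp

lemma DERIV_mult_logarithmic:
  fixes f g :: "'a::real_normed_field \<Rightarrow> 'a"
  assumes "(f has_field_derivative f y * l) (at y)" "(g has_field_derivative g y * l') (at y)"
  shows "((\<lambda>x. f x * g x) has_field_derivative f y * g y * (l + l')) (at y)"
  using DERIV_mult[OF assms] by (simp add: algebra_simps)

lemma DERIV_divide_logarithmic:
  fixes f g :: "'a::real_normed_field \<Rightarrow> 'a"
  assumes "(f has_field_derivative f y * l) (at y)" "(g has_field_derivative g y * l') (at y)" "g y \<noteq> 0"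
  shows "((\<lambda>x. f x / g x) has_field_derivative f y / g y * (l - l')) (at y)"
proof -
  have "(f y * l * g y - f y * (g y * l')) / (g y * g y) = f y / g y * (l - l')"
    using assms(3) by (simp add: field_simps)
  with DERIV_divide[OF assms] show ?thesis by simp
qed

section \<open>Binomial and harmonic identities\<close>

lemma harm_0 [simp]: "harm 0 = 0"
  by (simp add: harm_def)

lemma sum_inverse_shifted: "(\<Sum>i<n. 1 / (real c + 1 + real i)) = harm (c + n) - harm c"
  by (induction n) (simp_all add: harm_Suc inverse_eq_divide add_ac)

lemma sum_inverse_reversed: "(\<Sum>i<a. 1 / (real a - real i)) = harm a"
proof (induction a)
  case (Suc a)
  have "(\<Sum>i<Suc a. 1 / (real (Suc a) - real i)) = 1 / real (Suc a) + (\<Sum>i<a. 1 / (real a - real i))"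
    by (subst sum.lessThan_Suc_shift) simp
  then show ?case using Suc by (simp add: harm_Suc inverse_eq_divide)
qed simp

lemma sum_inverse_from:
  "a \<le> m \<Longrightarrow> (\<Sum>j\<in>{Suc a..m}. 1 / (real j - real a)) = harm (m - a)"
proof (induction m)
  case (Suc m)
  show ?case
  proof (cases "a = Suc m")
    case False
    with Suc have "a \<le> m" by simp
    with Suc.IH show ?thesis
      by (simp add: Suc_diff_le harm_Suc inverse_eq_divide)
  qed simp
qed simp

lemma binomial_Suc_left_ratio:
  "real ((Suc m + k) choose k) = real ((m + k) choose k) * (real m + 1 + real k) / (real m + 1)"
proof -
  have "(Suc m + k - k) * (Suc m + k choose k) = (Suc m + k) * ((m + k) choose k)"
    by (metis binomial_absorb_comp diff_Suc_1 add_Suc)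
  then have "real (Suc m) * real (Suc m + k choose k) = real (Suc m + k) * real ((m + k) choose k)"
    by (metis add_diff_cancel_right' of_nat_mult)
  then show ?thesis by (simp add: field_simps)
qed

lemma binomial_Suc_ratio:
  assumes "k \<le> m"
  shows "real (Suc m choose k) = real (m choose k) * (real m + 1) / (real m + 1 - real k)"
proof -
  have "(Suc m - k) * (Suc m choose k) = Suc m * (m choose k)"
    using binomial_absorb_comp[of "Suc m" k] by simp
  then have "(real m + 1 - real k) * real (Suc m choose k) = (real m + 1) * real (m choose k)"
    using assms by (metis of_nat_Suc of_nat_diff of_nat_mult le_SucI add.commute)
  moreover have "real m + 1 - real k \<noteq> 0" using assms by linarith
  ultimately show ?thesis by (simp add: field_simps)
qed

lemma binomial_Suc_right_ratio:
  assumes "n < j"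
  shows "real (j choose Suc n) = real (j choose n) * (real j - real n) / (real n + 1)"
proof -
  have "Suc n * (j choose Suc n) = (j - n) * (j choose n)"
    using binomial_absorption[of n j] binomial_absorb_comp[of j n] by simp
  then have "(real n + 1) * real (j choose Suc n) = (real j - real n) * real (j choose n)"
    using assms by (metis of_nat_Suc of_nat_diff of_nat_mult add.commute less_imp_le)
  then show ?thesis by (simp add: field_simps)
qed

lemma pochhammer_Suc_of_nat: "pochhammer (1 + real b) n = fact (b + n) / fact b"
proof -
  have "pochhammer (1::real) (b + n) = pochhammer 1 b * pochhammer (1 + real b) n"
    by (rule pochhammer_product')
  then show ?thesis by (simp add: pochhammer_fact[symmetric] field_simps)
qed

section \<open>The coefficients of the expansion\<close>

definition binom_pair :: "nat \<Rightarrow> nat \<Rightarrow> real" where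
  "binom_pair m k = real ((m + k) choose k) * real (m choose k)"

definition harm_comb :: "nat \<Rightarrow> nat \<Rightarrow> nat \<Rightarrow> real" where
  "harm_comb m n k = harm (m + k) + harm (m - k) + harm (n + k) + harm (n - k) - 4 * harm k"

definition tail_coeff :: "nat \<Rightarrow> nat \<Rightarrow> nat \<Rightarrow> real" where
  "tail_coeff m n k = (-1)^(k - n) * binom_pair m k * real ((n + k) choose k) / real ((k - 1) choose n)"

definition simple_coeff :: "nat \<Rightarrow> nat \<Rightarrow> nat \<Rightarrow> real" where
  "simple_coeff m n k =
     (if k \<le> n then binom_pair m k * binom_pair n k * (1 + real k * harm_comb m n k)
      else tail_coeff m n k)"

definition double_coeff :: "nat \<Rightarrow> nat \<Rightarrow> nat \<Rightarrow> real" where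
  "double_coeff m n k = (if k \<le> n then - binom_pair m k * binom_pair n k * real k else 0)"

lemma binom_pair_Suc:
  assumes "k \<le> m"
  shows "binom_pair (Suc m) k = binom_pair m k * (real m + 1 + real k) / (real m + 1 - real k)"
proof -
  have cancel: "A * c / d * (B * d / e) = A * B * c / e" if "d \<noteq> 0" for A B c d e :: real
    using that by (simp add: field_simps)
  show ?thesis
    unfolding binom_pair_def binomial_Suc_left_ratio binomial_Suc_ratio[OF assms]
    by (rule cancel) linarith
qed

lemma harm_comb_commute: "harm_comb m n k = harm_comb n m k"
  by (simp add: harm_comb_def)

lemma harm_comb_Suc_left:
  assumes "k \<le> m"
  shows "harm_comb (Suc m) n k = harm_comb m n k + 1 / (real m + 1 + real k) + 1 / (real m + 1 - real k)"
proof -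
  have "Suc m + k = Suc (m + k)" "Suc m - k = Suc (m - k)" using assms by simp_all
  then show ?thesis
    using assms by (simp add: harm_comb_def harm_Suc inverse_eq_divide add_ac)
qed

lemma tail_coeff_Suc_left:
  assumes "k \<le> m"
  shows "tail_coeff (Suc m) n k = tail_coeff m n k * (real m + 1 + real k) / (real m + 1 - real k)"
  unfolding tail_coeff_def binom_pair_Suc[OF assms] by (simp add: mult_ac)

lemma tail_coeff_Suc_right:
  assumes "Suc n < k"
  shows "tail_coeff m (Suc n) k = tail_coeff m n k * (real n + 1 + real k) / (real n + 1 - real k)"
proof -
  have sign: "(-1::real)^(k - Suc n) = - ((-1)^(k - n))"
    using assms by (simp add: Suc_diff_Suc[symmetric])
  have ratio: "real ((k - 1) choose Suc n) = real ((k - 1) choose n) * (real k - (real n + 1)) / (real n + 1)"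
    using assms binomial_Suc_right_ratio[of n "k - 1"] by simp
  have cancel: "- s * B * (N * c / a) / (D * (j - a) / a) = s * B * N / D * c / (a - j)"
    if "a \<noteq> 0" "D \<noteq> 0" "j - a \<noteq> 0" for s B N c a D j :: real
    using that by (simp add: field_simps)
  show ?thesis
    unfolding tail_coeff_def sign binomial_Suc_left_ratio ratio
    by (rule cancel) (use assms in auto)
qed

lemma tail_coeff_at_double_pole:
  "tail_coeff m n (Suc n) = - binom_pair m (Suc n) * binom_pair (Suc n) (Suc n) / 2"
proof -
  have "Suc (Suc (2 * n)) choose Suc n = 2 * (Suc (2 * n) choose Suc n)"
    using binomial_symmetric[of n "Suc (2 * n)"] by simp
  then have "real ((Suc n + Suc n) choose Suc n) = 2 * real ((n + Suc n) choose Suc n)"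
    by (metis add_Suc add_Suc_right mult_2 of_nat_mult of_nat_numeral)
  then show ?thesis by (simp add: tail_coeff_def binom_pair_def)
qed

lemma pole_coeff_update:
  fixes P S b k :: real
  assumes "b - k \<noteq> 0" "b + k \<noteq> 0"
  shows "P * (1 + k * S) * (b + k) / (b - k) - 2 * b * (- P * k) / (b - k)^2
       = P * (b + k) / (b - k) * (1 + k * (S + 1 / (b + k) + 1 / (b - k)))"
proof -
  obtain p q where pq: "p = b + k" "q = b - k" by blast
  then have bk: "b = (p + q) / 2" "k = (p - q) / 2" and "p \<noteq> 0" "q \<noteq> 0" using assms by auto
  then show ?thesis unfolding bk by (simp add: field_simps power2_eq_square)
qed

lemma coeffs_Suc_left:
  assumes "k \<le> m"
  defines "b \<equiv> real m + 1"
  shows "simple_coeff m n k * (b + k) / (b - k) - 2 * b * double_coeff m n k / (b - k)^2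
           = simple_coeff (Suc m) n k"
    and "double_coeff m n k * (b + k) / (b - k) = double_coeff (Suc m) n k"
proof -
  have nz: "b - k \<noteq> 0" "b + k \<noteq> 0" using assms by linarith+
  show "simple_coeff m n k * (b + k) / (b - k) - 2 * b * double_coeff m n k / (b - k)^2
          = simple_coeff (Suc m) n k"
  proof (cases "k \<le> n")
    case True
    then show ?thesis
      using pole_coeff_update[OF nz, of "binom_pair m k * binom_pair n k" "harm_comb m n k"] assms
      by (simp add: simple_coeff_def double_coeff_def binom_pair_Suc harm_comb_Suc_left)
  next
    case False
    then show ?thesis using assms by (simp add: simple_coeff_def double_coeff_def tail_coeff_Suc_left)
  qed
  show "double_coeff m n k * (b + k) / (b - k) = double_coeff (Suc m) n k"
    using assms by (simp add: double_coeff_def binom_pair_Suc)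
qed

lemma coeffs_Suc_right:
  assumes "k \<noteq> Suc n"
  defines "a \<equiv> real n + 1"
  shows "simple_coeff m n k * (a + k) / (a - k) - 2 * a * double_coeff m n k / (a - k)^2
           = simple_coeff m (Suc n) k"
    and "double_coeff m n k * (a + k) / (a - k) = double_coeff m (Suc n) k"
proof -
  have nz: "a - k \<noteq> 0" "a + k \<noteq> 0" using assms by auto
  show "simple_coeff m n k * (a + k) / (a - k) - 2 * a * double_coeff m n k / (a - k)^2
          = simple_coeff m (Suc n) k"
  proof (cases "k \<le> n")
    case True
    then show ?thesis
      using pole_coeff_update[OF nz, of "binom_pair m k * binom_pair n k" "harm_comb m n k"] assms
      by (simp add: simple_coeff_def double_coeff_def binom_pair_Suc harm_comb_commute[of m]
          harm_comb_Suc_left mult_ac)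
  next
    case False
    then show ?thesis
      using assms by (simp add: simple_coeff_def double_coeff_def tail_coeff_Suc_right)
  qed
  show "double_coeff m n k * (a + k) / (a - k) = double_coeff m (Suc n) k"
    using assms by (simp add: double_coeff_def binom_pair_Suc mult_ac)
qed

section \<open>The rational function\<close>

definition poch_ratio :: "nat \<Rightarrow> nat \<Rightarrow> real \<Rightarrow> real" where
  "poch_ratio m n x =
     x * pochhammer (1 - x) n * pochhammer (1 - x) m / (pochhammer x (Suc n) * pochhammer x (Suc m))"

lemma poch_ratio_commute: "poch_ratio m n x = poch_ratio n m x"
  by (simp add: poch_ratio_def ac_simps)

lemma poch_ratio_Suc_left:
  "poch_ratio (Suc m) n x = poch_ratio m n x * ((real m + 1 - x) / (x + (real m + 1)))"
  by (simp add: poch_ratio_def pochhammer_Suc[of "1 - x" m] pochhammer_Suc[of x "Suc m"] ac_simps)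

lemma poch_ratio_Suc_right:
  "poch_ratio m (Suc n) x = poch_ratio m n x * ((real n + 1 - x) / (x + (real n + 1)))"
  using poch_ratio_Suc_left poch_ratio_commute by metis

lemma poch_ratio_at_new_pole:
  assumes "n \<le> m"
  shows "2 * (real m + 1) * poch_ratio m n (- (real m + 1)) = tail_coeff (Suc m) n (Suc m)"
proof -
  define b where "b = real m + 1"
  define s where "s = (-1::real)^(m - n)"
  define t where "t = (-1::real)^(Suc n)"
  have fact_b: "(fact (Suc m) :: real) = b * fact m" by (simp add: b_def)
  have fact_2b: "(fact (Suc m + Suc m) :: real) = 2 * b * fact (Suc m + m)"
    by (simp add: b_def)
  have arg: "real m + 1 - of_nat (Suc n) + 1 = 1 + real (m - n)" using assms by simp
  have "pochhammer (- b) (Suc n) = t * pochhammer (1 + real (m - n)) (Suc n)"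
    by (simp only: b_def t_def pochhammer_minus arg)
  also have "\<dots> = t * (fact (Suc m) / fact (m - n))"
    using assms pochhammer_Suc_of_nat[of "m - n" "Suc n"] by (simp add: Suc_diff_le)
  finally have poch_n: "pochhammer (- b) (Suc n) = t * (fact (Suc m) / fact (m - n))" .
  have poch_m: "pochhammer (- b) (Suc m) = s * t * fact (Suc m)"
  proof -
    have "- b = - of_nat (Suc m)" by (simp add: b_def)
    then have "pochhammer (- b) (Suc m) = (-1)^(Suc m) * fact (Suc m)"
      by (simp only: pochhammer_same)
    also have "(-1::real)^(Suc m) = s * t"
      using assms by (simp add: s_def t_def power_add[symmetric])
    finally show ?thesis .
  qed
  have cancel: "2 * b * (- b * (A / (b * F)) * (B / (b * F)) / (t * (b * F / D) * (s * t * (b * F))))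
      = (- s) * (2 * b * B / (b * F * (b * F))) * 1 * (A / (b * F * G)) / (F / (G * D))"
    if "s = 1 \<or> s = -1" "t = 1 \<or> t = -1" "b \<noteq> 0" "F \<noteq> 0" "G \<noteq> 0" "D \<noteq> 0"
    for A B F G D s t :: real
    using that by (auto simp: field_simps)
  have shift: "1 - - b = 1 + real (Suc m)" by (simp add: b_def)
  have "2 * b * poch_ratio m n (- b)
      = 2 * b * (- b * (fact (Suc m + n) / fact (Suc m)) * (fact (Suc m + m) / fact (Suc m))
      / (t * (fact (Suc m) / fact (m - n)) * (s * t * fact (Suc m))))"
    by (simp only: poch_ratio_def poch_n poch_m shift pochhammer_Suc_of_nat)
  also have "\<dots> = (- s) * (fact (Suc m + Suc m) / (fact (Suc m) * fact (Suc m))) * 1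
      * (fact (Suc m + n) / (fact (Suc m) * fact n)) / (fact m / (fact n * fact (m - n)))"
    unfolding fact_b fact_2b
  proof (rule cancel)
    show "s = 1 \<or> s = -1" "t = 1 \<or> t = -1" by (simp_all add: s_def t_def minus_one_power_iff)
  qed (simp_all add: b_def)
  also have "\<dots> = tail_coeff (Suc m) n (Suc m)"
  proof -
    have "real ((Suc m + Suc m) choose Suc m) = fact (Suc m + Suc m) / (fact (Suc m) * fact (Suc m))"
      by (subst binomial_fact) simp_all
    moreover have "real ((n + Suc m) choose Suc m) = fact (Suc m + n) / (fact (Suc m) * fact n)"
      by (subst binomial_fact) (simp_all add: add.commute)
    moreover have "real ((Suc m - 1) choose n) = fact m / (fact n * fact (m - n))"
      using assms by (simp add: binomial_fact)
    moreover have "(-1::real)^(Suc m - n) = - s"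
      using assms by (simp add: s_def Suc_diff_le)
    ultimately show ?thesis
      by (simp only: tail_coeff_def binom_pair_def binomial_n_n of_nat_1)
  qed
  finally show ?thesis by (simp only: b_def)
qed

text \<open>The function (x + n + 1) R(m,n;x) with the factor x + n + 1 cancelled, hence smooth at -(n + 1).\<close>

definition poch_ratio_cleared :: "nat \<Rightarrow> nat \<Rightarrow> real \<Rightarrow> real" where
  "poch_ratio_cleared m n x = x * pochhammer (1 - x) n * pochhammer (1 - x) m
     / (pochhammer x (Suc n) * (\<Prod>j\<in>{0..<Suc m} - {Suc n}. x + real j))"

lemma poch_ratio_cleared_eq:
  assumes "Suc n \<le> m" "x + real (Suc n) \<noteq> 0"
  shows "poch_ratio_cleared m n x = (x + real (Suc n)) * poch_ratio m n x"
proof -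
  have split: "pochhammer x (Suc m) = (x + real (Suc n)) * (\<Prod>j\<in>{0..<Suc m} - {Suc n}. x + real j)"
    unfolding pochhammer_prod by (subst prod.remove[of _ "Suc n"]) (use assms(1) in auto)
  have cancel: "X / (Q * P) = c * (X / (Q * (c * P)))" if "c \<noteq> 0" for X Q P c :: real
    using that by simp
  show ?thesis
    unfolding poch_ratio_cleared_def poch_ratio_def split by (rule cancel[OF assms(2)])
qed

lemma poch_ratio_cleared_log_deriv:
  assumes num: "\<forall>i. 1 - y + real i \<noteq> 0" and den: "\<forall>j. j \<noteq> Suc n \<longrightarrow> y + real j \<noteq> 0"
  shows "(poch_ratio_cleared m n has_field_derivative poch_ratio_cleared m n y *
     ((1 / y + (\<Sum>i\<in>{0..<n}. -1 / (1 - y + real i)) + (\<Sum>i\<in>{0..<m}. -1 / (1 - y + real i)))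
       - ((\<Sum>i\<in>{0..<Suc n}. 1 / (y + real i)) + (\<Sum>j\<in>{0..<Suc m} - {Suc n}. 1 / (y + real j))))) (at y)"
proof -
  have fun_eq: "poch_ratio_cleared m n =
     (\<lambda>x. x * (\<Prod>i\<in>{0..<n}. 1 - x + real i) * (\<Prod>i\<in>{0..<m}. 1 - x + real i)
     / ((\<Prod>i\<in>{0..<Suc n}. x + real i) * (\<Prod>j\<in>{0..<Suc m} - {Suc n}. x + real j)))"
    by (rule ext) (simp only: poch_ratio_cleared_def pochhammer_prod)
  have y: "y \<noteq> 0" using den[rule_format, of 0] by simp
  have id: "((\<lambda>x. x) has_field_derivative y * (1 / y)) (at y)"
    using y by (auto intro!: derivative_eq_intros)
  have num_deriv: "((\<lambda>x. \<Prod>i\<in>{0..<k}. 1 - x + real i) has_field_derivative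
      (\<Prod>i\<in>{0..<k}. 1 - y + real i) * (\<Sum>i\<in>{0..<k}. -1 / (1 - y + real i))) (at y)" for k
    by (rule DERIV_prod_logarithmic) (use num in \<open>auto intro!: derivative_eq_intros\<close>)
  have den_deriv: "((\<lambda>x. \<Prod>i\<in>J. x + real i) has_field_derivative
      (\<Prod>i\<in>J. y + real i) * (\<Sum>i\<in>J. 1 / (y + real i))) (at y)" if J: "finite J" "Suc n \<notin> J" for J
  proof (rule DERIV_prod_logarithmic)
    show "((\<lambda>x. x + real i) has_field_derivative 1) (at y)" for i
      by (auto intro!: derivative_eq_intros)
    show "y + real i \<noteq> 0" if "i \<in> J" for i
      using den J(2) that by metis
  qed (rule J(1))
  have "(\<Prod>i\<in>{0..<Suc n}. y + real i) * (\<Prod>j\<in>{0..<Suc m} - {Suc n}. y + real j) \<noteq> 0"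
    using den by auto
  note deriv = DERIV_divide_logarithmic[OF
      DERIV_mult_logarithmic[OF DERIV_mult_logarithmic[OF id num_deriv[of n]] num_deriv[of m]]
      DERIV_mult_logarithmic[OF den_deriv[of "{0..<Suc n}"] den_deriv[of "{0..<Suc m} - {Suc n}"]] this]
  show ?thesis unfolding fun_eq by (rule deriv) auto
qed

lemma poch_ratio_cleared_log_deriv_at_pole:
  assumes "Suc n \<le> m"
  defines "y \<equiv> - (real n + 1)"
  shows "(1 / y + (\<Sum>i\<in>{0..<n}. -1 / (1 - y + real i)) + (\<Sum>i\<in>{0..<m}. -1 / (1 - y + real i)))
       - ((\<Sum>i\<in>{0..<Suc n}. 1 / (y + real i)) + (\<Sum>j\<in>{0..<Suc m} - {Suc n}. 1 / (y + real j)))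
       = -1 / (2 * (real n + 1)) - harm_comb m (Suc n) (Suc n)"
proof -
  have upper: "(\<Sum>i\<in>{0..<k}. -1 / (1 - y + real i)) = - (harm (Suc n + k) - harm (Suc n))" for k
    using sum_inverse_shifted[of "Suc n" k]
    by (simp add: y_def atLeast0LessThan sum_negf add_ac)
  have lower: "(\<Sum>i\<in>{0..<Suc n}. 1 / (y + real i)) = - harm (Suc n)"
  proof -
    have "(\<Sum>i\<in>{0..<Suc n}. 1 / (y + real i)) = - (\<Sum>i<Suc n. 1 / (real (Suc n) - real i))"
      unfolding atLeast0LessThan sum_negf[symmetric] by (rule sum.cong) (simp_all add: y_def field_simps)
    then show ?thesis by (simp only: sum_inverse_reversed)
  qed
  have split: "{0..<Suc m} - {Suc n} = {0..<Suc n} \<union> {Suc (Suc n)..m}" using assms(1) by auto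
  have "(\<Sum>j\<in>{0..<Suc m} - {Suc n}. 1 / (y + real j))
      = (\<Sum>j\<in>{0..<Suc n}. 1 / (y + real j)) + (\<Sum>j\<in>{Suc (Suc n)..m}. 1 / (y + real j))"
    unfolding split by (rule sum.union_disjoint) auto
  also have "(\<Sum>j\<in>{Suc (Suc n)..m}. 1 / (y + real j)) = (\<Sum>j\<in>{Suc (Suc n)..m}. 1 / (real j - real (Suc n)))"
    by (rule sum.cong) (simp_all add: y_def)
  also have "\<dots> = harm (m - Suc n)"
    by (rule sum_inverse_from[OF assms(1)])
  finally have rest: "(\<Sum>j\<in>{0..<Suc m} - {Suc n}. 1 / (y + real j)) = - harm (Suc n) + harm (m - Suc n)"
    unfolding lower .
  have "harm (Suc n + Suc n) = harm (Suc n + n) + 1 / (2 * (real n + 1))"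
    by (simp add: harm_Suc inverse_eq_divide)
  then show ?thesis
    unfolding upper lower rest by (simp add: harm_comb_def y_def field_simps)
qed

lemma pfrac_sum_regular_part_at_pole:
  assumes "Suc n \<le> m"
    and IH: "\<And>x. \<forall>k\<le>m. x + real k \<noteq> 0 \<Longrightarrow>
               pfrac_sum (simple_coeff m n) (double_coeff m n) {0..m} x = poch_ratio m n x"
  shows "pfrac_sum (simple_coeff m n) (double_coeff m n) ({0..m} - {Suc n}) (- (real n + 1))
           = tail_coeff m n (Suc n) * (-1 / (2 * (real n + 1)) - harm_comb m (Suc n) (Suc n))"
proof -
  define a where "a = real n + 1"
  define G where "G = pfrac_sum (simple_coeff m n) (double_coeff m n) ({0..m} - {Suc n})"
  define e where "e = tail_coeff m n (Suc n)"
  have split: "pfrac_sum (simple_coeff m n) (double_coeff m n) {0..m} x = G x + e / (x + a)" for x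
    unfolding G_def e_def a_def
    by (subst pfrac_sum_remove[of _ "Suc n"])
      (use assms(1) in \<open>auto simp: simple_coeff_def double_coeff_def add_ac\<close>)
  have "\<forall>\<^sub>F x in at (-a). \<forall>k\<in>{..m}. x \<noteq> - real k"
    by (intro eventually_ball_finite ballI eventually_neq_at_within) auto
  then have near: "\<forall>\<^sub>F x in at (-a). poch_ratio_cleared m n x = (x - - a) * G x + e"
  proof eventually_elim
    case (elim x)
    then have poles: "\<forall>k\<le>m. x + real k \<noteq> 0" by (simp add: eq_neg_iff_add_eq_0)
    then have xa: "x + a \<noteq> 0" using assms(1) by (auto simp: a_def)
    have "poch_ratio_cleared m n x = (x + a) * poch_ratio m n x"
      using poch_ratio_cleared_eq[OF assms(1)] xa by (simp add: a_def add_ac)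
    also have "\<dots> = (x + a) * (G x + e / (x + a))"
      using IH[OF poles] split by simp
    also have "\<dots> = (x - - a) * G x + e"
      using xa by (simp add: field_simps)
    finally show ?case .
  qed
  have cont: "isCont G (-a)"
    unfolding G_def pfrac_sum_def by (intro continuous_intros) (auto simp: a_def)
  have "(poch_ratio_cleared m n has_field_derivative
         poch_ratio_cleared m n (-a) * (-1 / (2 * a) - harm_comb m (Suc n) (Suc n))) (at (-a))"
    using poch_ratio_cleared_log_deriv[of "-a" n m] poch_ratio_cleared_log_deriv_at_pole[OF assms(1)]
    by (simp add: a_def)
  from regular_part_eq_deriv[OF this cont near] show ?thesis
    by (simp add: G_def e_def a_def)
qed

lemma pfrac_expansion_Suc_left:
  assumes "n \<le> m"
    and IH: "\<And>x. \<forall>k\<le>m. x + real k \<noteq> 0 \<Longrightarrow>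
               pfrac_sum (simple_coeff m n) (double_coeff m n) {0..m} x = poch_ratio m n x"
    and poles: "\<forall>k\<le>Suc m. x + real k \<noteq> 0"
  shows "pfrac_sum (simple_coeff (Suc m) n) (double_coeff (Suc m) n) {0..Suc m} x = poch_ratio (Suc m) n x"
proof -
  define b where "b = real m + 1"
  have xb: "x + b \<noteq> 0" using poles[rule_format, of "Suc m"] by (simp add: b_def add_ac)
  have poles': "\<forall>k\<le>m. x + real k \<noteq> 0" using poles by auto
  have "poch_ratio (Suc m) n x = poch_ratio m n x * ((b - x) / (x + b))"
    unfolding b_def by (rule poch_ratio_Suc_left)
  also have "\<dots> = pfrac_sum (simple_coeff m n) (double_coeff m n) {0..m} x * ((b - x) / (x + b))"
    by (simp only: IH[OF poles'])
  also have "\<dots> = pfrac_sum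
        (\<lambda>k. simple_coeff m n k * (b + k) / (b - k) - 2 * b * double_coeff m n k / (b - k)^2)
        (\<lambda>k. double_coeff m n k * (b + k) / (b - k)) {0..m} x
      + 2 * b * pfrac_sum (simple_coeff m n) (double_coeff m n) {0..m} (-b) / (x + b)"
    by (rule pfrac_sum_times_ratio) (use xb poles' in \<open>auto simp: b_def\<close>)
  also have "pfrac_sum
        (\<lambda>k. simple_coeff m n k * (b + k) / (b - k) - 2 * b * double_coeff m n k / (b - k)^2)
        (\<lambda>k. double_coeff m n k * (b + k) / (b - k)) {0..m} x
      = pfrac_sum (simple_coeff (Suc m) n) (double_coeff (Suc m) n) {0..m} x"
    by (rule pfrac_sum_cong) (use coeffs_Suc_left in \<open>auto simp: b_def\<close>)
  also have "2 * b * pfrac_sum (simple_coeff m n) (double_coeff m n) {0..m} (-b)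
      = tail_coeff (Suc m) n (Suc m)"
    using IH[of "-b"] poch_ratio_at_new_pole[OF assms(1)] by (simp add: b_def)
  also have "pfrac_sum (simple_coeff (Suc m) n) (double_coeff (Suc m) n) {0..m} x
        + tail_coeff (Suc m) n (Suc m) / (x + b)
      = pfrac_sum (simple_coeff (Suc m) n) (double_coeff (Suc m) n) {0..Suc m} x"
    using assms(1) by (simp add: pfrac_sum_def simple_coeff_def double_coeff_def b_def add_ac)
  finally show ?thesis ..
qed

lemma pfrac_expansion_Suc_right:
  assumes "Suc n \<le> m"
    and IH: "\<And>x. \<forall>k\<le>m. x + real k \<noteq> 0 \<Longrightarrow>
               pfrac_sum (simple_coeff m n) (double_coeff m n) {0..m} x = poch_ratio m n x"
    and poles: "\<forall>k\<le>m. x + real k \<noteq> 0"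
  shows "pfrac_sum (simple_coeff m (Suc n)) (double_coeff m (Suc n)) {0..m} x = poch_ratio m (Suc n) x"
proof -
  define a where "a = real n + 1"
  define K where "K = {0..m} - {Suc n}"
  define C where "C = binom_pair m (Suc n) * binom_pair (Suc n) (Suc n)"
  define S where "S = harm_comb m (Suc n) (Suc n)"
  let ?F = "pfrac_sum (simple_coeff m n) (double_coeff m n) K"
  let ?F' = "pfrac_sum (simple_coeff m (Suc n)) (double_coeff m (Suc n)) K"
  have xa: "x + a \<noteq> 0" using poles[rule_format, of "Suc n"] assms(1) by (simp add: a_def add_ac)
  have K: "finite K" "\<forall>k\<in>K. real k \<noteq> a" "\<forall>k\<in>K. x + real k \<noteq> 0"
    using poles by (auto simp: K_def a_def)
  have merge: "2 * a * ((- C / 2) * (-1 / (2 * a) - S)) / (x + a) + (- C / 2) / (x + a) * ((a - x) / (x + a))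
      = C * (1 + a * S) / (x + a) + (- C * a) / (x + a)^2"
  proof -
    obtain t where t: "t = x + a" by blast
    then have x: "x = t - a" by simp
    have "t \<noteq> 0" "a \<noteq> 0" using xa t by (auto simp: a_def)
    then show ?thesis unfolding x by (simp add: field_simps power2_eq_square)
  qed
  have "poch_ratio m (Suc n) x = poch_ratio m n x * ((a - x) / (x + a))"
    unfolding a_def by (rule poch_ratio_Suc_right)
  also have "poch_ratio m n x = ?F x + (- C / 2) / (x + a)"
    unfolding IH[OF poles, symmetric] using assms(1)
    by (subst pfrac_sum_remove[of _ "Suc n"])
       (auto simp: K_def C_def a_def simple_coeff_def double_coeff_def tail_coeff_at_double_pole add_ac)
  also have "(?F x + (- C / 2) / (x + a)) * ((a - x) / (x + a))
      = ?F x * ((a - x) / (x + a)) + (- C / 2) / (x + a) * ((a - x) / (x + a))"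
    by (rule distrib_right)
  also have "?F x * ((a - x) / (x + a))
      = pfrac_sum
          (\<lambda>k. simple_coeff m n k * (a + k) / (a - k) - 2 * a * double_coeff m n k / (a - k)^2)
          (\<lambda>k. double_coeff m n k * (a + k) / (a - k)) K x + 2 * a * ?F (-a) / (x + a)"
    by (rule pfrac_sum_times_ratio[OF K(1,2) xa K(3)])
  also have "pfrac_sum
          (\<lambda>k. simple_coeff m n k * (a + k) / (a - k) - 2 * a * double_coeff m n k / (a - k)^2)
          (\<lambda>k. double_coeff m n k * (a + k) / (a - k)) K x = ?F' x"
    by (rule pfrac_sum_cong) (use coeffs_Suc_right in \<open>auto simp: a_def K_def\<close>)
  also have "?F (-a) = (- C / 2) * (-1 / (2 * a) - S)"
    using pfrac_sum_regular_part_at_pole[OF assms(1) IH] tail_coeff_at_double_pole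
    by (simp add: K_def a_def C_def S_def)
  also have "?F' x + 2 * a * ((- C / 2) * (-1 / (2 * a) - S)) / (x + a)
        + (- C / 2) / (x + a) * ((a - x) / (x + a))
      = ?F' x + (C * (1 + a * S) / (x + a) + (- C * a) / (x + a)^2)"
    by (simp only: add.assoc merge)
  also have "?F' x + (C * (1 + a * S) / (x + a) + (- C * a) / (x + a)^2)
      = pfrac_sum (simple_coeff m (Suc n)) (double_coeff m (Suc n)) {0..m} x"
    using assms(1) by (subst (2) pfrac_sum_remove[of _ "Suc n"])
      (auto simp: K_def C_def S_def a_def simple_coeff_def double_coeff_def add_ac)
  finally show ?thesis ..
qed

lemma pfrac_expansion:
  assumes "n \<le> m" "\<forall>k\<le>m. x + real k \<noteq> 0"
  shows "pfrac_sum (simple_coeff m n) (double_coeff m n) {0..m} x = poch_ratio m n x"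
  using assms
proof (induction n arbitrary: m x)
  case 0
  then show ?case
  proof (induction m arbitrary: x)
    case 0
    then show ?case
      by (simp add: pfrac_sum_def poch_ratio_def simple_coeff_def double_coeff_def binom_pair_def)
  next
    case (Suc m)
    then show ?case by (intro pfrac_expansion_Suc_left) auto
  qed
next
  case (Suc n)
  then show ?case by (intro pfrac_expansion_Suc_right) auto
qed

lemma pfrac_sum_eq_explicit:
  assumes "n \<le> m" "\<forall>k\<le>m. x + real k \<noteq> 0"
  shows "(\<Sum>k=0..n. real ((m+k) choose k) * real (m choose k) * real ((n+k) choose k) * real (n choose k)
             * (- real k / (x + real k)^2
                + (1 + real k * (harm (m+k) + harm (m-k) + harm (n+k) + harm (n-k) - 4 * harm k)) / (x + real k)))
         + (\<Sum>k=n+1..m. (-1)^(k-n) / (x + real k)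
             * real ((m+k) choose k) * real (m choose k) * real ((n+k) choose k) / real ((k-1) choose n))
       = pfrac_sum (simple_coeff m n) (double_coeff m n) {0..m} x"
proof -
  have "{0..m} = {0..n} \<union> {n+1..m}" using assms(1) by auto
  then have "pfrac_sum (simple_coeff m n) (double_coeff m n) {0..m} x
      = pfrac_sum (simple_coeff m n) (double_coeff m n) {0..n} x
        + pfrac_sum (simple_coeff m n) (double_coeff m n) {n+1..m} x"
    unfolding pfrac_sum_def by (simp add: sum.union_disjoint)
  moreover have "pfrac_sum (simple_coeff m n) (double_coeff m n) {0..n} x
      = (\<Sum>k=0..n. real ((m+k) choose k) * real (m choose k) * real ((n+k) choose k) * real (n choose k)
             * (- real k / (x + real k)^2
                + (1 + real k * (harm (m+k) + harm (m-k) + harm (n+k) + harm (n-k) - 4 * harm k)) / (x + real k)))"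
    unfolding pfrac_sum_def using assms
    by (intro sum.cong) (auto simp: simple_coeff_def double_coeff_def binom_pair_def harm_comb_def field_simps)
  moreover have "pfrac_sum (simple_coeff m n) (double_coeff m n) {n+1..m} x
      = (\<Sum>k=n+1..m. (-1)^(k-n) / (x + real k)
             * real ((m+k) choose k) * real (m choose k) * real ((n+k) choose k) / real ((k-1) choose n))"
    unfolding pfrac_sum_def
    by (intro sum.cong) (auto simp: simple_coeff_def double_coeff_def tail_coeff_def binom_pair_def mult_ac)
  ultimately show ?thesis by simp
qed

lemma of_rat_gharm_1: "of_rat (gharm 1 n) = harm n"
  by (simp add: gharm_def harm_def of_rat_sum of_rat_divide inverse_eq_divide)

lemma of_rat_pochhammer: "of_rat (pochhammer q k) = pochhammer (of_rat q) k"
  by (simp add: pochhammer_prod of_rat_prod of_rat_add)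

theorem theorem2p1:
  fixes x :: rat and m n :: nat
  assumes "0 < n" and "n \<le> m"
    and "\<forall>k\<le>m. x + of_nat k \<noteq> 0"
  shows "(\<Sum>k=0..n. of_nat ((m+k) choose k) * of_nat (m choose k)
             * of_nat ((n+k) choose k) * of_nat (n choose k)
             * ( - of_nat k / (x + of_nat k)^2
                 + (1 + of_nat k * (gharm 1 (m+k) + gharm 1 (m-k) + gharm 1 (n+k)
                                    + gharm 1 (n-k) - 4 * gharm 1 k)) / (x + of_nat k)))
         + (\<Sum>k=n+1..m. (-1)^(k-n) / (x + of_nat k)
             * of_nat ((m+k) choose k) * of_nat (m choose k) * of_nat ((n+k) choose k)
             / of_nat ((k-1) choose n))
         = x * pochhammer (1 - x) n * pochhammer (1 - x) m
           / (pochhammer x (n+1) * pochhammer x (m+1))"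
  (is "?L = ?R")
proof -
  \<comment> \<open>The identity holds for \<open>n = 0\<close> as well.\<close>
  define X where "X = (of_rat x :: real)"
  have poles: "\<forall>k\<le>m. X + real k \<noteq> 0"
    using assms(3) unfolding X_def by (metis of_rat_add of_rat_of_nat_eq of_rat_eq_0_iff)
  have "(of_rat ?L :: real) = pfrac_sum (simple_coeff m n) (double_coeff m n) {0..m} X"
    by (simp only: of_rat_add of_rat_mult of_rat_divide of_rat_sum of_rat_minus of_rat_diff
        of_rat_power of_rat_of_nat_eq of_rat_1 of_rat_numeral_eq of_rat_gharm_1 flip: X_def)
      (rule pfrac_sum_eq_explicit[OF assms(2) poles])
  also have "\<dots> = poch_ratio m n X"
    by (rule pfrac_expansion[OF assms(2) poles])
  also have "\<dots> = of_rat ?R"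
    by (simp only: poch_ratio_def Suc_eq_plus1 of_rat_mult of_rat_divide of_rat_diff of_rat_1
        of_rat_pochhammer flip: X_def)
  finally show ?thesis by (simp only: of_rat_eq_iff)
qed

end
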